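(* Let $\bm{H}_1,\dots,\bm{H}_N$ be random matrices with values in $\mathbb{C}^{N_R\times N_T}$ (sub-channels of a frequency-selective MIMO channel), let $\bm{\mathcal{H}}=\operatorname{diag}(\bm{H}_1,\dots,\bm{H}_N)$ be the block diagonal matrix, let $\lambda^i_{\max}$ be the maximum eigenvalue of $\bm{H}_i\bm{H}_i^\ast$ and $\lambda_{\max}$ the maximum eigenvalue of $\bm{\mathcal{H}}\bm{\mathcal{H}}^\ast$. Let $W,\rho>0$. Consider the capacity with channel side information known at the transmitter $$c=\frac{W}{N}\max_{\bm{R}\succeq 0,\ \operatorname{Tr}[\bm{R}]=N_TN}\log_2\det\Big(\bm{I}_{N_RN}+\frac{\rho}{N_T}\bm{\mathcal{H}}\bm{R}\bm{\mathcal{H}}^\ast\Big)$$ (maximum over Hermitian positive semidefinite $\bm{R}$ of size $N_TN$), and the capacity with channel side information unknown at the transmitter $$c=\frac{W}{N}\sum_{i=1}^N\log_2\det\Big(\bm{I}_{N_R}+\frac{\rho}{N_T}\bm{H}_i\bm{H}_i^\ast\Big).$$ The condition "for every $i\in\{1,\dots,N\}$, $\mathbb{E}[(1+\lambda^i_{\max})^\theta]<\infty$ for some $\theta>0$" is equivalent to the condition "$\mathbb{E}[(1+\lambda_{\max})^\theta]<\infty$ for some $\theta>0$", and if it holds then the distribution of the capacity (in either case) is light-tailed.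
   Context: A nonnegative random variable $X$ is light-tailed if $\Pr(X>x)=O(e^{-\theta x})$ for some $\theta>0$, equivalently $\mathbb{E}[e^{\theta X}]<\infty$ for some $\theta>0$. $W$ is the bandwidth, $N$ the number of sub-channels, $\rho=P/(N_0W)$. *)

theory Defs
  imports "HOL-Analysis.Analysis" "HOL-Probability.Probability" "HOL-Library.Landau_Symbols"
begin

definition cadj :: "complex^'n::finite^'m::finite \<Rightarrow> complex^'m^'n" where
  "cadj A = (\<chi> i j. cnj (A $ j $ i))"

text \<open>Block diagonal matrix diag(H_1,...,H_N); blocks indexed by the finite type 'n (N = CARD('n)).\<close>
definition block_diag :: "('n::finite \<Rightarrow> complex^'t::finite^'r::finite) \<Rightarrow> complex^('t \<times> 'n)^('r \<times> 'n)" where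
  "block_diag H = (\<chi> ri tj. if snd ri = snd tj then H (snd ri) $ fst ri $ fst tj else 0)"

definition lambda_max :: "complex^'n::finite^'n \<Rightarrow> real" where
  "lambda_max A = Max {l::real. \<exists>v. v \<noteq> 0 \<and> A *v v = complex_of_real l *s v}"

definition psd_herm :: "complex^'n::finite^'n \<Rightarrow> bool" where
  "psd_herm R \<longleftrightarrow> cadj R = R \<and>
     (\<forall>x. 0 \<le> Re (\<Sum>i\<in>UNIV. cnj (x $ i) * (R *v x) $ i))"

text \<open>Capacity with CSI known at the transmitter (maximum written as supremum; it is attained).\<close>
definition cap_known :: "real \<Rightarrow> real \<Rightarrow> ('n::finite \<Rightarrow> complex^'t::finite^'r::finite) \<Rightarrow> real" where
  "cap_known W \<rho> H = W / real CARD('n) *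
     (SUP R \<in> {R :: complex^('t \<times> 'n)^('t \<times> 'n). psd_herm R \<and> trace R = of_nat (CARD('t) * CARD('n))}.
        log 2 (Re (det (mat 1 + (\<rho> / real CARD('t)) *\<^sub>R (block_diag H ** R ** cadj (block_diag H))))))"

definition cap_unknown :: "real \<Rightarrow> real \<Rightarrow> ('n::finite \<Rightarrow> complex^'t::finite^'r::finite) \<Rightarrow> real" where
  "cap_unknown W \<rho> H = W / real CARD('n) *
     (\<Sum>i\<in>UNIV. log 2 (Re (det (mat 1 + (\<rho> / real CARD('t)) *\<^sub>R (H i ** cadj (H i))))))"

definition light_tailed :: "'a measure \<Rightarrow> ('a \<Rightarrow> real) \<Rightarrow> bool" where
  "light_tailed M X \<longleftrightarrow> X \<in> borel_measurable M \<and>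
     (\<exists>\<theta>>0. (\<lambda>x. measure M {\<omega> \<in> space M. X \<omega> > x}) \<in> O[at_top](\<lambda>x. exp (- \<theta> * x)))"

end

theory Submission
  imports Defs
begin

text \<open>The largest eigenvalue of a Gram matrix \<open>H H\<^sup>*\<close> is the maximum of \<open>|H\<^sup>* x|\<^sup>2\<close> over unit
  vectors \<open>x\<close>. As \<open>block_diag H\<close> acts blockwise, the largest eigenvalue of its Gram matrix is the
  largest of the blockwise ones; with finitely many blocks the smallest of the exponents then shows
  that the two moment conditions are equivalent. Both capacities are at most
  \<open>\<alpha> + \<beta> ln (1 + \<lambda>\<^sub>m\<^sub>a\<^sub>x)\<close>: under the trace constraint the entries of \<open>I + c H R H\<^sup>*\<close> are at most
  \<open>(1 + c K) (1 + \<lambda>\<^sub>m\<^sub>a\<^sub>x)\<close> with \<open>K\<close> depending only on the dimensions, and an \<open>n \<times> n\<close> determinant is at most \<open>n!\<close> times the \<open>n\<close>-th power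
  of a bound on its entries. Markov's inequality for \<open>(1 + \<lambda>\<^sub>m\<^sub>a\<^sub>x) powr \<theta>\<close> turns this
  logarithmic bound into an exponential tail bound.\<close>

definition cinner :: "complex^'n::finite \<Rightarrow> complex^'n \<Rightarrow> complex" where
  "cinner x y = (\<Sum>i\<in>UNIV. cnj (x$i) * y$i)"

lemma cinner_adj: "cinner x (A *v y) = cinner (cadj A *v x) y"
proof -
  have "cinner x (A *v y) = (\<Sum>i\<in>UNIV. \<Sum>j\<in>UNIV. cnj (x$i) * A$i$j * y$j)"
    unfolding cinner_def matrix_vector_mult_def by (simp add: sum_distrib_left mult.assoc)
  also have "\<dots> = (\<Sum>j\<in>UNIV. \<Sum>i\<in>UNIV. cnj (x$i) * A$i$j * y$j)"
    by (rule sum.swap)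
  also have "\<dots> = cinner (cadj A *v x) y"
    unfolding cinner_def matrix_vector_mult_def cadj_def by (simp add: sum_distrib_left mult_ac)
  finally show ?thesis .
qed

lemma cnj_cinner: "cnj (cinner x y) = cinner y x"
  unfolding cinner_def by (simp add: cnj_sum mult.commute)

lemma norm_vec_power2: "(norm (x::complex^'n::finite))^2 = (\<Sum>i\<in>UNIV. (cmod (x$i))^2)"
  unfolding norm_vec_def L2_set_def by (simp add: sum_nonneg)

lemma cinner_self: "cinner x x = complex_of_real ((norm x)^2)"
  unfolding cinner_def norm_vec_power2
  by (simp add: of_real_sum mult.commute flip: complex_norm_square)

lemma Re_cinner_self: "Re (cinner x x) = (norm x)^2"
  by (simp add: cinner_self)

lemma cinner_add_left: "cinner (x + y) z = cinner x z + cinner y z"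
  unfolding cinner_def by (simp add: distrib_right sum.distrib)

lemma cinner_add_right: "cinner x (y + z) = cinner x y + cinner x z"
  unfolding cinner_def by (simp add: distrib_left sum.distrib)

lemma cinner_diff_right: "cinner x (y - z) = cinner x y - cinner x z"
  unfolding cinner_def by (simp add: right_diff_distrib sum_subtractf)

lemma cinner_scale_left: "cinner (c *s x) y = cnj c * cinner x y"
  unfolding cinner_def by (simp add: sum_distrib_left mult_ac)

lemma cinner_scale_right: "cinner x (c *s y) = c * cinner x y"
  unfolding cinner_def by (simp add: sum_distrib_left mult_ac)

lemma cinner_scaleR_left: "cinner (r *\<^sub>R x) y = of_real r * cinner x y"
  unfolding cinner_def vector_scaleR_component
  by (simp add: sum_distrib_left scaleR_conv_of_real mult_ac)

lemma cinner_scaleR_right: "cinner x (r *\<^sub>R y) = of_real r * cinner x y"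
  unfolding cinner_def vector_scaleR_component
  by (simp add: sum_distrib_left scaleR_conv_of_real mult_ac)

lemma inner_eq_Re_cinner: "inner x y = Re (cinner x (y::complex^'n::finite))"
  unfolding cinner_def inner_vec_def inner_complex_def by simp

lemma cinner_axis_left: "cinner (axis p 1) x = x $ p"
proof -
  have "cnj (axis p 1 $ i) * x $ i = (if i = p then x $ p else 0)" for i
    by (simp add: axis_def)
  then show ?thesis unfolding cinner_def by simp
qed

lemma matrix_vector_mult_axis: "(R *v axis q 1) $ p = R$p$q"
proof -
  have "R$p$i * axis q 1 $ i = (if i = q then R$p$q else 0)" for i
    by (simp add: axis_def)
  then show ?thesis unfolding matrix_vector_mult_def by simp
qed

lemma matrix_vector_mult_scaleR: "A *v (r *\<^sub>R x) = r *\<^sub>R (A *v (x::complex^'n::finite))"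
  by (simp add: matrix_vector_mult_def vec_eq_iff scaleR_sum_right mult_ac)

lemma scaleR_matrix_vector_mult: "(r *\<^sub>R A) *v x = r *\<^sub>R (A *v (x::complex^'n::finite))"
  by (simp add: matrix_vector_mult_def vec_eq_iff scaleR_sum_right)

lemma matrix_vector_mult_scale: "A *v (c *s x) = c *s (A *v (x::complex^'n::finite))"
  by (simp add: matrix_vector_mult_def vec_eq_iff sum_distrib_left mult_ac)

lemma cadj_cadj [simp]: "cadj (cadj A) = A"
  unfolding cadj_def by (simp add: vec_eq_iff)

lemma cadj_matrix_mult: "cadj (A ** B) = cadj B ** cadj A"
  unfolding cadj_def matrix_matrix_mult_def by (simp add: vec_eq_iff cnj_sum mult.commute)

lemma cadj_mat_1 [simp]: "cadj (mat 1 :: complex^'n::finite^'n) = mat 1"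
  unfolding cadj_def mat_def by (simp add: vec_eq_iff)

lemma cadj_add: "cadj (A + B) = cadj A + cadj B"
  unfolding cadj_def by (simp add: vec_eq_iff)

lemma cadj_scaleR: "cadj (c *\<^sub>R A) = c *\<^sub>R cadj A"
  unfolding cadj_def by (simp add: vec_eq_iff)

lemma cnj_entry_hermitian: "cadj A = A \<Longrightarrow> A$q$p = cnj (A$p$q)"
  unfolding cadj_def by (metis complex_cnj_cnj vec_lambda_beta)

lemma cinner_hermitian: "cadj A = A \<Longrightarrow> cinner x (A *v y) = cinner (A *v x) y"
  by (metis cinner_adj)

lemma cnj_cinner_hermitian: "cadj A = A \<Longrightarrow> cnj (cinner x (A *v y)) = cinner y (A *v x)"
  by (metis cinner_hermitian cnj_cinner)

lemma psd_herm_iff: "psd_herm R \<longleftrightarrow> cadj R = R \<and> (\<forall>x. 0 \<le> Re (cinner x (R *v x)))"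
  unfolding psd_herm_def cinner_def ..

section \<open>The largest eigenvalue of a Hermitian matrix\<close>

lemma linear_coeff_zero_if_quadratic_nonpos:
  fixes a b :: real
  assumes "\<And>t. 2*t*b + t^2*a \<le> 0"
  shows "b = 0"
proof (rule ccontr)
  assume "b \<noteq> 0"
  define c where "c = \<bar>a\<bar> + 1"
  have "c > 0" "2*c + a > 0" unfolding c_def by auto
  have "2*(b/c)*b + (b/c)^2*a = b^2 * (2*c + a) / c^2"
    using \<open>c > 0\<close> by (simp add: field_simps power2_eq_square)
  also have "\<dots> > 0" using \<open>b \<noteq> 0\<close> \<open>c > 0\<close> \<open>2*c + a > 0\<close> by simp
  finally show False using assms[of "b/c"] by simp
qed

text \<open>Along every line through the maximiser the Rayleigh bound is a quadratic in the parameter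
  that is nonpositive and vanishes at the origin, so its linear coefficient vanishes.\<close>

lemma rayleigh_maximiser_is_eigenvector:
  fixes A :: "complex^'n::finite^'n"
  assumes herm: "cadj A = A" and x0: "norm x0 = 1"
    and bound: "\<And>x. Re (cinner x (A *v x)) \<le> \<mu> * (norm x)^2"
    and \<mu>: "\<mu> = Re (cinner x0 (A *v x0))"
  shows "A *v x0 = of_real \<mu> *s x0"
proof -
  define w where "w = A *v x0 - of_real \<mu> *s x0"
  have "Re (cinner y w) = 0" for y
  proof (rule linear_coeff_zero_if_quadratic_nonpos)
    fix t :: real
    let ?a = "Re (cinner y (A *v y)) - \<mu> * (norm y)^2"
    have quad: "Re (cinner (x0 + t *\<^sub>R y) (A *v (x0 + t *\<^sub>R y)))
        = \<mu> + 2*t*Re (cinner y (A *v x0)) + t^2 * Re (cinner y (A *v y))"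
      using arg_cong[OF cnj_cinner_hermitian[OF herm, of y x0], of Re] \<mu>
      unfolding matrix_vector_right_distrib matrix_vector_mult_scaleR cinner_add_left
        cinner_add_right cinner_scaleR_left cinner_scaleR_right
      by (simp add: power2_eq_square algebra_simps)
    have "Re (cinner x0 x0) = 1" using x0 by (simp add: Re_cinner_self)
    then have norm: "(norm (x0 + t *\<^sub>R y))^2 = 1 + 2*t*Re (cinner y x0) + t^2 * (norm y)^2"
      using arg_cong[OF cnj_cinner[of y x0], of Re]
      unfolding Re_cinner_self[symmetric] cinner_add_left cinner_add_right
        cinner_scaleR_left cinner_scaleR_right
      by (simp add: power2_eq_square algebra_simps)
    have "2*t*Re (cinner y w) + t^2*?a
        = Re (cinner (x0 + t *\<^sub>R y) (A *v (x0 + t *\<^sub>R y))) - \<mu> * (norm (x0 + t *\<^sub>R y))^2"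
      unfolding quad norm w_def cinner_diff_right cinner_scale_right by (simp add: algebra_simps)
    also have "\<dots> \<le> 0" using bound[of "x0 + t *\<^sub>R y"] by simp
    finally show "2*t*Re (cinner y w) + t^2*?a \<le> 0" .
  qed
  then have "(norm w)^2 = 0" using Re_cinner_self[of w] by simp
  then show ?thesis unfolding w_def by simp
qed

lemma hermitian_rayleigh_attains_max:
  fixes A :: "complex^'n::finite^'n"
  assumes herm: "cadj A = A"
  obtains x0 \<mu> where "norm x0 = 1" "A *v x0 = of_real \<mu> *s x0"
    "\<And>x. Re (cinner x (A *v x)) \<le> \<mu> * (norm x)^2"
proof -
  define Q where "Q x = Re (cinner x (A *v x))" for x
  have "continuous_on UNIV Q"
    unfolding Q_def cinner_def matrix_vector_mult_def by (intro continuous_intros)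
  moreover have "sphere (0::complex^'n) 1 \<noteq> {}" by simp
  ultimately obtain x0 where x0: "x0 \<in> sphere 0 1" and max: "\<And>y. y \<in> sphere 0 1 \<Longrightarrow> Q y \<le> Q x0"
    using continuous_attains_sup[OF compact_sphere _ continuous_on_subset[OF _ subset_UNIV]]
    by metis
  have bound: "Q x \<le> Q x0 * (norm x)^2" for x
  proof (cases "x = 0")
    case False
    have "Q ((1 / norm x) *\<^sub>R x) = (1 / norm x)^2 * Q x"
      unfolding Q_def matrix_vector_mult_scaleR cinner_scaleR_left cinner_scaleR_right
      by (simp add: power2_eq_square)
    moreover have "Q ((1 / norm x) *\<^sub>R x) \<le> Q x0" using max False by simp
    ultimately have "(1 / norm x)^2 * Q x \<le> Q x0" by simp
    then show ?thesis using False by (simp add: field_simps)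
  qed (simp add: Q_def cinner_def)
  have "norm x0 = 1" using x0 by simp
  moreover have "A *v x0 = of_real (Q x0) *s x0"
    by (rule rayleigh_maximiser_is_eigenvector[OF herm \<open>norm x0 = 1\<close>])
      (use bound in \<open>simp_all add: Q_def\<close>)
  ultimately show thesis using that bound unfolding Q_def by blast
qed

lemma hermitian_eigenvectors_orthogonal:
  assumes herm: "cadj A = A"
    and "A *v x = of_real l *s x" "A *v y = of_real l' *s y" "l \<noteq> l'"
  shows "cinner x y = 0"
proof -
  have "of_real l' * cinner x y = of_real l * cinner x y"
    using cinner_hermitian[OF herm, of x y] assms(2,3)
    by (simp add: cinner_scale_left cinner_scale_right)
  then show ?thesis using \<open>l \<noteq> l'\<close> by simp
qed

lemma finite_real_eigenvalues_hermitian: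
  fixes A :: "complex^'n::finite^'n"
  assumes herm: "cadj A = A"
  shows "finite {l::real. \<exists>v. v \<noteq> 0 \<and> A *v v = of_real l *s v}" (is "finite ?S")
proof -
  define ev where "ev l = (SOME v. v \<noteq> 0 \<and> A *v v = of_real l *s v)" for l
  have ev: "ev l \<noteq> 0" "A *v ev l = of_real l *s ev l" if "l \<in> ?S" for l
    using someI_ex[of "\<lambda>v. v \<noteq> 0 \<and> A *v v = of_real l *s v"] that unfolding ev_def by auto
  have "inj_on ev ?S"
  proof (rule inj_onI)
    fix l l' assume l: "l \<in> ?S" and l': "l' \<in> ?S" and eq: "ev l = ev l'"
    have "of_real l *s ev l = A *v ev l" using ev(2)[OF l] by simp
    also have "\<dots> = of_real l' *s ev l" using ev(2)[OF l'] eq by simp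
    finally have lv: "of_real l *s ev l = of_real l' *s ev l" .
    obtain i where "ev l $ i \<noteq> 0"
      using ev(1)[OF l] by (auto simp: vec_eq_iff)
    moreover have "of_real l * ev l $ i = of_real l' * ev l $ i"
      using arg_cong[OF lv, of "\<lambda>v. v $ i"] by simp
    ultimately show "l = l'" by simp
  qed
  moreover have "pairwise orthogonal (ev ` ?S)"
  proof (rule pairwiseI)
    fix x y assume "x \<in> ev ` ?S" "y \<in> ev ` ?S" "x \<noteq> y"
    then obtain l l' where l: "l \<in> ?S" "x = ev l" and l': "l' \<in> ?S" "y = ev l'" and "l \<noteq> l'"
      by blast
    then have "cinner x y = 0"
      using hermitian_eigenvectors_orthogonal[OF herm ev(2)[OF l(1)] ev(2)[OF l'(1)]] by simp
    then show "orthogonal x y" unfolding orthogonal_def inner_eq_Re_cinner by simp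
  qed
  moreover have "0 \<notin> ev ` ?S"
  proof
    assume "0 \<in> ev ` ?S"
    then obtain l where "l \<in> ?S" "ev l = 0" by (rule imageE) simp
    then show False using ev(1) by simp
  qed
  ultimately show ?thesis
    using pairwise_orthogonal_independent finiteI_independent finite_imageD by blast
qed

lemma lambda_max_hermitian_eq:
  fixes A :: "complex^'n::finite^'n"
  assumes herm: "cadj A = A" and "norm x0 = 1" "A *v x0 = of_real \<mu> *s x0"
    and bound: "\<And>x. Re (cinner x (A *v x)) \<le> \<mu> * (norm x)^2"
  shows "lambda_max A = \<mu>"
  unfolding lambda_max_def
proof (rule Max_eqI[OF finite_real_eigenvalues_hermitian[OF herm]])
  fix l assume "l \<in> {l::real. \<exists>v. v \<noteq> 0 \<and> A *v v = of_real l *s v}"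
  then obtain v where v: "v \<noteq> 0" "A *v v = of_real l *s v" by blast
  have "l * (norm v)^2 \<le> \<mu> * (norm v)^2"
    using bound[of v] unfolding v(2) cinner_scale_right by (simp add: cinner_self)
  then show "l \<le> \<mu>" using v(1) by simp
next
  show "\<mu> \<in> {l::real. \<exists>v. v \<noteq> 0 \<and> A *v v = of_real l *s v}"
    using assms(2,3) by (intro CollectI exI[of _ x0]) auto
qed

lemma rayleigh_le_lambda_max:
  assumes "cadj A = A"
  shows "Re (cinner x (A *v x)) \<le> lambda_max A * (norm x)^2"
proof -
  obtain x0 \<mu> where "norm x0 = 1" "A *v x0 = of_real \<mu> *s x0"
    and "\<And>x. Re (cinner x (A *v x)) \<le> \<mu> * (norm x)^2"
    using hermitian_rayleigh_attains_max[OF assms] by blast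
  with lambda_max_hermitian_eq[OF assms this] show ?thesis by simp
qed

lemma lambda_max_eigenvector:
  assumes "cadj A = A"
  shows "\<exists>x. norm x = 1 \<and> A *v x = of_real (lambda_max A) *s x"
proof -
  obtain x0 \<mu> where "norm x0 = 1" "A *v x0 = of_real \<mu> *s x0"
    and "\<And>x. Re (cinner x (A *v x)) \<le> \<mu> * (norm x)^2"
    using hermitian_rayleigh_attains_max[OF assms] by blast
  with lambda_max_hermitian_eq[OF assms this] show ?thesis by auto
qed

lemma hermitian_gram: "cadj (A ** cadj A) = A ** cadj (A::complex^'c::finite^'r::finite)"
  by (simp add: cadj_matrix_mult)

lemma cinner_gram:
  "cinner x ((A ** cadj A) *v x) = of_real ((norm (cadj A *v x))^2)" for A :: "complex^'c::finite^'r::finite"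
  by (simp add: cinner_adj cinner_self flip: matrix_vector_mul_assoc)

lemma norm_cadj_mv_le_lambda_max:
  "(norm (cadj A *v x))^2 \<le> lambda_max (A ** cadj A) * (norm x)^2" for A :: "complex^'c::finite^'r::finite"
  using rayleigh_le_lambda_max[OF hermitian_gram[of A], of x] by (simp add: cinner_gram)

lemma lambda_max_gram_attained:
  fixes A :: "complex^'c::finite^'r::finite"
  shows "\<exists>x. norm x = 1 \<and> (norm (cadj A *v x))^2 = lambda_max (A ** cadj A)"
proof -
  obtain x where x: "norm x = 1" "(A ** cadj A) *v x = of_real (lambda_max (A ** cadj A)) *s x"
    using lambda_max_eigenvector[OF hermitian_gram] by blast
  have "complex_of_real ((norm (cadj A *v x))^2) = cinner x ((A ** cadj A) *v x)"
    by (rule cinner_gram[symmetric])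
  also have "\<dots> = of_real (lambda_max (A ** cadj A))"
    unfolding x(2) cinner_scale_right cinner_self x(1) by simp
  finally show ?thesis using x(1) by (auto simp only: of_real_eq_iff)
qed

lemma lambda_max_gram_nonneg: "0 \<le> lambda_max (A ** cadj (A::complex^'c::finite^'r::finite))"
  by (metis lambda_max_gram_attained zero_le_power2)

lemma lambda_max_gram_eq_SUP:
  fixes A :: "complex^'c::finite^'r::finite"
  shows "lambda_max (A ** cadj A) = (SUP x\<in>sphere 0 1. (norm (cadj A *v x))^2)"
proof (rule cSup_eq_maximum[symmetric])
  obtain x where "norm x = 1" "(norm (cadj A *v x))^2 = lambda_max (A ** cadj A)"
    using lambda_max_gram_attained by blast
  then show "lambda_max (A ** cadj A) \<in> (\<lambda>x. (norm (cadj A *v x))^2) ` sphere 0 1"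
    by (intro image_eqI[where x=x]) auto
next
  fix y assume "y \<in> (\<lambda>x. (norm (cadj A *v x))^2) ` sphere 0 1"
  then obtain z where "norm z = 1" "y = (norm (cadj A *v z))^2" by auto
  then show "y \<le> lambda_max (A ** cadj A)" using norm_cadj_mv_le_lambda_max[of A z] by simp
qed

lemma norm_axis_1_complex [simp]: "norm (axis i (1::complex)) = 1"
  by (simp add: inner_axis' norm_eq_1)

lemma norm_entry_power2_le_lambda_max_gram:
  "(cmod (A$i$j))^2 \<le> lambda_max (A ** cadj A)" for A :: "complex^'c::finite^'r::finite"
proof -
  have "cmod (A$i$j) = cmod ((cadj A *v axis i 1) $ j)"
    by (simp add: matrix_vector_mult_axis cadj_def)
  also have "\<dots> \<le> norm (cadj A *v axis i 1)" by (rule Finite_Cartesian_Product.norm_nth_le)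
  finally have "(cmod (A$i$j))^2 \<le> (norm (cadj A *v axis i 1))^2" by (simp add: power_mono)
  also have "\<dots> \<le> lambda_max (A ** cadj A)"
    using norm_cadj_mv_le_lambda_max[of A "axis i 1"] by simp
  finally show ?thesis .
qed

section \<open>Block diagonal matrices\<close>

definition vec_block :: "complex^('r::finite \<times> 'n::finite) \<Rightarrow> 'n \<Rightarrow> complex^'r" where
  "vec_block x k = (\<chi> r. x $ (r,k))"

lemma sum_UNIV_single: "(\<And>j. j \<noteq> k \<Longrightarrow> g j = 0) \<Longrightarrow> (\<Sum>j\<in>(UNIV::'a::finite set). g j) = g k"
  by (subst sum.remove[of UNIV k]) (auto intro!: sum.neutral)

lemma sum_UNIV_prod:
  "(\<Sum>p\<in>(UNIV::('a::finite \<times> 'b::finite) set). f p) = (\<Sum>k\<in>UNIV. \<Sum>r\<in>UNIV. f (r,k))"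
  by (subst sum.swap) (simp add: sum.cartesian_product flip: UNIV_Times_UNIV)

lemma cadj_block_diag_mv: "(cadj (block_diag H) *v x) $ (t,k) = (cadj (H k) *v vec_block x k) $ t"
proof -
  have "(cadj (block_diag H) *v x) $ (t,k) =
        (\<Sum>k'\<in>UNIV. \<Sum>r\<in>UNIV. (if k' = k then cnj (H k $ r $ t) else 0) * x $ (r,k'))"
    unfolding cadj_def block_diag_def matrix_vector_mult_def
    by (simp add: sum_UNIV_prod, intro sum.cong refl, auto)
  also have "\<dots> = (\<Sum>r\<in>UNIV. cnj (H k $ r $ t) * x $ (r,k))"
    by (subst sum_UNIV_single[of k]) auto
  finally show ?thesis
    unfolding cadj_def vec_block_def matrix_vector_mult_def by simp
qed

lemma norm_power2_vec_blocks: "(norm x)^2 = (\<Sum>k\<in>UNIV. (norm (vec_block x k))^2)"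
  unfolding norm_vec_power2 vec_block_def by (simp add: sum_UNIV_prod)

lemma norm_power2_cadj_block_diag_mv:
  "(norm (cadj (block_diag H) *v x))^2 = (\<Sum>k\<in>UNIV. (norm (cadj (H k) *v vec_block x k))^2)"
  unfolding norm_vec_power2 by (simp add: sum_UNIV_prod cadj_block_diag_mv)

lemma lambda_max_block_le_block_diag:
  fixes H :: "'n::finite \<Rightarrow> complex^'t::finite^'r::finite"
  shows "lambda_max (H k ** cadj (H k)) \<le> lambda_max (block_diag H ** cadj (block_diag H))"
proof -
  obtain v where v: "norm v = 1" "(norm (cadj (H k) *v v))^2 = lambda_max (H k ** cadj (H k))"
    using lambda_max_gram_attained by blast
  define x :: "complex^('r \<times> 'n)" where "x = (\<chi> p. if snd p = k then v $ fst p else 0)"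
  have blocks: "vec_block x k' = (if k' = k then v else 0)" for k'
    unfolding vec_block_def x_def by (simp add: vec_eq_iff)
  have "(norm x)^2 = 1"
    unfolding norm_power2_vec_blocks[of x] blocks using v(1) by (subst sum_UNIV_single[of k]) auto
  moreover have "(norm (cadj (block_diag H) *v x))^2 = lambda_max (H k ** cadj (H k))"
    unfolding norm_power2_cadj_block_diag_mv blocks v(2)[symmetric]
    by (subst sum_UNIV_single[of k]) auto
  ultimately show ?thesis
    using norm_cadj_mv_le_lambda_max[of "block_diag H" x] by simp
qed

lemma lambda_max_block_diag_le_block:
  fixes H :: "'n::finite \<Rightarrow> complex^'t::finite^'r::finite"
  shows "\<exists>k. lambda_max (block_diag H ** cadj (block_diag H)) \<le> lambda_max (H k ** cadj (H k))"
proof -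
  define l where "l k = lambda_max (H k ** cadj (H k))" for k
  obtain v where v: "norm v = 1"
    "(norm (cadj (block_diag H) *v v))^2 = lambda_max (block_diag H ** cadj (block_diag H))"
    using lambda_max_gram_attained by blast
  have "lambda_max (block_diag H ** cadj (block_diag H))
      = (\<Sum>k\<in>UNIV. (norm (cadj (H k) *v vec_block v k))^2)"
    unfolding v(2)[symmetric] by (rule norm_power2_cadj_block_diag_mv)
  also have "\<dots> \<le> (\<Sum>k\<in>UNIV. l k * (norm (vec_block v k))^2)"
    unfolding l_def by (intro sum_mono norm_cadj_mv_le_lambda_max)
  also have "\<dots> \<le> (\<Sum>k\<in>UNIV. Max (range l) * (norm (vec_block v k))^2)"
    by (intro sum_mono mult_right_mono) (simp_all add: Max_ge)
  also have "\<dots> = Max (range l) * (norm v)^2"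
    by (simp add: norm_power2_vec_blocks[of v] sum_distrib_left)
  finally have "lambda_max (block_diag H ** cadj (block_diag H)) \<le> Max (range l)"
    using v(1) by simp
  moreover have "Max (range l) \<in> range l" by (rule Max_in) simp_all
  then obtain k where "Max (range l) = l k" by blast
  ultimately show ?thesis unfolding l_def by auto
qed

lemma norm_det_le:
  fixes M :: "complex^'n::finite^'n"
  assumes "\<And>i j. cmod (M$i$j) \<le> K"
  shows "cmod (det M) \<le> fact CARD('n) * K ^ CARD('n)"
proof -
  let ?P = "{p. p permutes (UNIV::'n set)}"
  have "cmod (det M) \<le> (\<Sum>p\<in>?P. cmod (of_int (sign p) * (\<Prod>i\<in>UNIV. M$i$p i)))"
    unfolding det_def by (rule norm_sum)
  also have "\<dots> \<le> (\<Sum>p\<in>?P. K ^ CARD('n))"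
  proof (rule sum_mono)
    fix p :: "'n \<Rightarrow> 'n"
    have "cmod (of_int (sign p)) = 1" "\<bar>real_of_int (sign p)\<bar> = 1" by (simp_all add: sign_def)
    then have "cmod (of_int (sign p) * (\<Prod>i\<in>UNIV. M$i$p i)) = (\<Prod>i\<in>UNIV. cmod (M$i$p i))"
      by (simp add: norm_mult prod_norm)
    also have "\<dots> \<le> (\<Prod>i\<in>(UNIV::'n set). K)" by (intro prod_mono) (simp add: assms)
    finally show "cmod (of_int (sign p) * (\<Prod>i\<in>UNIV. M$i$p i)) \<le> K ^ CARD('n)" by simp
  qed
  also have "\<dots> = fact CARD('n) * K ^ CARD('n)"
    using card_permutations[of "UNIV::'n set" "CARD('n)"] by simp
  finally show ?thesis .
qed

lemma det_cadj: "det (cadj (A::complex^'n::finite^'n)) = cnj (det A)"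
proof -
  have "cadj A = transpose (\<chi> i j. cnj (A$i$j))"
    unfolding cadj_def transpose_def by (simp add: vec_eq_iff)
  moreover have "det (\<chi> i j. cnj (A$i$j)) = cnj (det A)"
    unfolding det_def by simp
  ultimately show ?thesis by (simp add: det_transpose)
qed

lemma Im_det_hermitian: "cadj A = A \<Longrightarrow> Im (det (A::complex^'n::finite^'n)) = 0"
  using det_cadj[of A] by (metis cnj.simps(2) equation_minus_iff neg_equal_zero)

lemma det_I_plus_scaleR_psd_nonzero:
  fixes P :: "complex^'n::finite^'n"
  assumes "psd_herm P" and "0 \<le> t"
  shows "det (mat 1 + t *\<^sub>R P) \<noteq> 0"
proof -
  have "x = 0" if "(mat 1 + t *\<^sub>R P) *v x = 0" for x
  proof -
    have "x + t *\<^sub>R (P *v x) = 0"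
      using that by (simp add: matrix_vector_mult_add_rdistrib scaleR_matrix_vector_mult)
    then have "Re (cinner x (x + t *\<^sub>R (P *v x))) = 0" by (simp add: cinner_def)
    then have "(norm x)^2 + t * Re (cinner x (P *v x)) = 0"
      by (simp add: cinner_add_right cinner_scaleR_right Re_cinner_self)
    moreover have "0 \<le> t * Re (cinner x (P *v x))"
      using assms by (simp add: psd_herm_iff)
    ultimately have "(norm x)^2 = 0" using zero_le_power2[of "norm x"] by linarith
    then show "x = 0" by simp
  qed
  then have "invertible (mat 1 + t *\<^sub>R P)"
    unfolding invertible_left_inverse matrix_left_invertible_ker by blast
  then show ?thesis unfolding invertible_det_nz .
qed

text \<open>For \<open>t \<in> [0,1]\<close> the determinant of \<open>I + t P\<close> is real and never zero, and it is \<open>1\<close> at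
  \<open>t = 0\<close>; by the intermediate value theorem it stays positive.\<close>

lemma Re_det_I_plus_psd_pos:
  fixes P :: "complex^'n::finite^'n"
  assumes "psd_herm P"
  shows "0 < Re (det (mat 1 + P))"
proof (rule ccontr)
  assume "\<not> ?thesis"
  then have f1: "Re (det (mat 1 + 1 *\<^sub>R P)) \<le> 0" by simp
  define f where "f t = Re (det (mat 1 + t *\<^sub>R P))" for t
  have "continuous_on {0..1} f"
    unfolding f_def det_def by (intro continuous_intros)
  moreover have "f 0 = 1" unfolding f_def by simp
  ultimately obtain t where t: "0 \<le> t" "f t = 0"
    using IVT2'[of f 1 0 0] f1 unfolding f_def by auto
  have herm: "cadj (mat 1 + t *\<^sub>R P) = mat 1 + t *\<^sub>R P"
    using assms by (simp add: cadj_add cadj_scaleR psd_herm_def)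
  have "det (mat 1 + t *\<^sub>R P) = 0"
    using t(2) Im_det_hermitian[OF herm] unfolding f_def by (simp add: complex_eq_iff)
  then show False using det_I_plus_scaleR_psd_nonzero[OF assms t(1)] by simp
qed

lemma psd_herm_mat_1: "psd_herm (mat 1)"
  by (simp add: psd_herm_iff Re_cinner_self)

lemma psd_herm_scaleR_sandwich:
  fixes A :: "complex^'c::finite^'r::finite"
  assumes "psd_herm R" and "0 \<le> c"
  shows "psd_herm (c *\<^sub>R (A ** R ** cadj A))"
  unfolding psd_herm_iff
proof safe
  show "cadj (c *\<^sub>R (A ** R ** cadj A)) = c *\<^sub>R (A ** R ** cadj A)"
    using assms(1) by (simp add: cadj_scaleR cadj_matrix_mult matrix_mul_assoc psd_herm_def)
  fix x
  have "cinner x ((A ** R ** cadj A) *v x) = cinner x (A *v (R *v (cadj A *v x)))"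
    by (simp add: matrix_vector_mul_assoc matrix_mul_assoc)
  also have "\<dots> = cinner (cadj A *v x) (R *v (cadj A *v x))" by (rule cinner_adj)
  finally show "0 \<le> Re (cinner x ((c *\<^sub>R (A ** R ** cadj A)) *v x))"
    using assms by (simp add: scaleR_matrix_vector_mult cinner_scaleR_right psd_herm_iff)
qed

lemma psd_herm_diag_nonneg:
  assumes "psd_herm R"
  shows "0 \<le> Re (R$p$p)"
proof -
  have "0 \<le> Re (cinner (axis p 1) (R *v axis p 1))" using assms by (simp add: psd_herm_iff)
  then show ?thesis by (simp add: cinner_axis_left matrix_vector_mult_axis)
qed

text \<open>Testing the form against \<open>e\<^sub>p + u e\<^sub>q\<close> with the unimodular \<open>u = - cnj z / |z|\<close>,
  \<open>z = R\<^sub>p\<^sub>q\<close>, isolates \<open>- 2 |z|\<close> as the cross term.\<close>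

lemma psd_herm_norm_entry_le:
  fixes R :: "complex^'n::finite^'n"
  assumes "psd_herm R"
  shows "2 * cmod (R$p$q) \<le> Re (R$p$p) + Re (R$q$q)"
proof -
  have herm: "cadj R = R" and psd: "\<And>x. 0 \<le> Re (cinner x (R *v x))"
    using assms by (auto simp: psd_herm_iff)
  define z where "z = R$p$q"
  show ?thesis
  proof (cases "z = 0")
    case True
    then show ?thesis
      using psd_herm_diag_nonneg[OF assms, of p] psd_herm_diag_nonneg[OF assms, of q] z_def by simp
  next
    case False
    define u where "u = - cnj z / of_real (cmod z)"
    have zz: "cnj z * z = of_real ((cmod z)^2)"
      by (metis complex_norm_square mult.commute)
    have nz: "complex_of_real (cmod z) \<noteq> 0" using False by simp
    have uz: "u * z = - of_real (cmod z)"
    proof -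
      have "u * z = - (cnj z * z) / of_real (cmod z)" unfolding u_def by simp
      then show ?thesis unfolding zz using nz by (simp add: power2_eq_square)
    qed
    have cu: "cnj u * u = 1"
    proof -
      have "cnj u * u = (cnj z * z) / (of_real (cmod z) * of_real (cmod z))" unfolding u_def by simp
      then show ?thesis unfolding zz using nz by (simp add: power2_eq_square)
    qed
    define x where "x = axis p 1 + u *s axis q 1"
    have "cinner x (R *v x) = R$p$p + u * R$p$q + cnj u * R$q$p + cnj u * u * R$q$q"
      unfolding x_def matrix_vector_right_distrib matrix_vector_mult_scale cinner_add_left
        cinner_add_right cinner_scale_left cinner_scale_right cinner_axis_left matrix_vector_mult_axis
      by (simp add: algebra_simps)
    also have "\<dots> = R$p$p + R$q$q + u * z + cnj (u * z)"
      using cu cnj_entry_hermitian[OF herm, of q p] unfolding z_def by simp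
    finally have "Re (cinner x (R *v x)) = Re (R$p$p) + Re (R$q$q) - 2 * cmod z"
      using uz by simp
    then show ?thesis using psd[of x] z_def by simp
  qed
qed

lemma psd_herm_norm_entry_le_trace:
  fixes R :: "complex^'n::finite^'n"
  assumes "psd_herm R" and "trace R = of_real T"
  shows "cmod (R$p$q) \<le> T"
proof -
  have "Re (R$i$i) \<le> T" for i
  proof -
    have "Re (R$i$i) \<le> (\<Sum>j\<in>UNIV. Re (R$j$j))" by (rule member_le_sum) (use psd_herm_diag_nonneg[OF assms(1)] in auto)
    also have "\<dots> = T" using assms(2) unfolding trace_def by (metis Re_complex_of_real Re_sum)
    finally show ?thesis .
  qed
  then show ?thesis using psd_herm_norm_entry_le[OF assms(1), of p q] by (smt (verit))
qed

section \<open>Bounding the log-determinant\<close>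

lemma norm_sandwich_entry_le:
  fixes A :: "complex^'c::finite^'r::finite" and R :: "complex^'c^'c"
  assumes R: "\<And>p q. cmod (R$p$q) \<le> T"
  shows "cmod ((A ** R ** cadj A) $ a $ b) \<le> real CARD('c)^2 * T * lambda_max (A ** cadj A)"
proof -
  let ?L = "lambda_max (A ** cadj A)"
  have T: "0 \<le> T" using R norm_ge_zero order_trans by blast
  have A: "cmod (A$a$p) * cmod (A$b$q) \<le> ?L" for p q
  proof -
    have "cmod (A$a$p) * cmod (A$b$q) \<le> ((cmod (A$a$p))^2 + (cmod (A$b$q))^2) / 2"
      using sum_squares_bound[of "cmod (A$a$p)" "cmod (A$b$q)"] by simp
    also have "\<dots> \<le> ?L"
      using norm_entry_power2_le_lambda_max_gram[of A a p] norm_entry_power2_le_lambda_max_gram[of A b q]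
      by simp
    finally show ?thesis .
  qed
  have "(A ** R ** cadj A) $ a $ b = (\<Sum>q\<in>UNIV. \<Sum>p\<in>UNIV. A$a$p * R$p$q * cnj (A$b$q))"
    unfolding matrix_matrix_mult_def cadj_def by (simp add: sum_distrib_right)
  then have "cmod ((A ** R ** cadj A) $ a $ b)
      \<le> (\<Sum>q\<in>UNIV. \<Sum>p\<in>(UNIV::'c set). cmod (A$a$p * R$p$q * cnj (A$b$q)))"
    by (simp only:) (rule order_trans[OF norm_sum sum_mono[OF norm_sum]])
  also have "\<dots> = (\<Sum>q\<in>UNIV. \<Sum>p\<in>(UNIV::'c set). cmod (R$p$q) * (cmod (A$a$p) * cmod (A$b$q)))"
    by (simp add: norm_mult mult_ac)
  also have "\<dots> \<le> (\<Sum>q\<in>(UNIV::'c set). \<Sum>p\<in>(UNIV::'c set). T * ?L)"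
    using R A T by (intro sum_mono mult_mono) auto
  also have "\<dots> = real CARD('c)^2 * T * ?L" by (simp add: power2_eq_square)
  finally show ?thesis .
qed

lemma log_det_I_plus_sandwich_le:
  fixes A :: "complex^'c::finite^'r::finite" and R :: "complex^'c^'c"
  assumes psd: "psd_herm R" and R: "\<And>p q. cmod (R$p$q) \<le> T" and c: "0 \<le> c"
  shows "log 2 (Re (det (mat 1 + c *\<^sub>R (A ** R ** cadj A)))) \<le>
     log 2 (fact CARD('r)) + real CARD('r) * log 2 (1 + c * (real CARD('c)^2 * T))
       + real CARD('r) * log 2 (1 + lambda_max (A ** cadj A))"
proof -
  let ?L = "lambda_max (A ** cadj A)" and ?K = "c * (real CARD('c)^2 * T)"
  let ?M = "mat 1 + c *\<^sub>R (A ** R ** cadj A)"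
  have L: "0 \<le> ?L" by (rule lambda_max_gram_nonneg)
  have "0 \<le> T" using R norm_ge_zero order_trans by blast
  then have K: "0 \<le> ?K" using c by simp
  have "cmod (?M$i$j) \<le> (1 + ?K) * (1 + ?L)" for i j
  proof -
    have "?M$i$j = (mat 1 :: complex^'r^'r)$i$j + c *\<^sub>R ((A ** R ** cadj A) $ i $ j)" by simp
    then have "cmod (?M$i$j) \<le> cmod ((mat 1 :: complex^'r^'r)$i$j) + cmod (c *\<^sub>R ((A ** R ** cadj A) $ i $ j))"
      by (metis norm_triangle_ineq)
    also have "\<dots> = cmod ((mat 1 :: complex^'r^'r)$i$j) + c * cmod ((A ** R ** cadj A) $ i $ j)"
      using c by simp
    also have "\<dots> \<le> 1 + ?K * ?L"
      using norm_sandwich_entry_le[OF R, of A i j] c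
      by (intro add_mono) (auto simp: mat_def mult.assoc intro: mult_left_mono)
    also have "\<dots> \<le> (1 + ?K) * (1 + ?L)" using K L by (simp add: algebra_simps)
    finally show ?thesis .
  qed
  then have "Re (det ?M) \<le> fact CARD('r) * ((1 + ?K) * (1 + ?L)) ^ CARD('r)"
    by (rule order_trans[OF complex_Re_le_cmod norm_det_le])
  moreover have "0 < Re (det ?M)"
    by (rule Re_det_I_plus_psd_pos[OF psd_herm_scaleR_sandwich[OF psd c]])
  ultimately have "log 2 (Re (det ?M)) \<le> log 2 (fact CARD('r) * ((1 + ?K) * (1 + ?L)) ^ CARD('r))"
    by (intro log_mono) auto
  also have "\<dots> = log 2 (fact CARD('r)) + real CARD('r) * (log 2 (1 + ?K) + log 2 (1 + ?L))"
    using K L by (simp add: log_mult log_nat_power)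
  also have "\<dots> = log 2 (fact CARD('r)) + real CARD('r) * log 2 (1 + ?K) + real CARD('r) * log 2 (1 + ?L)"
    by (simp add: algebra_simps)
  finally show ?thesis .
qed

definition max_log_det :: "real \<Rightarrow> complex^'c::finite^'r::finite \<Rightarrow> real" where
  "max_log_det c Z = (SUP R \<in> {R :: complex^'c^'c. psd_herm R \<and> trace R = of_nat CARD('c)}.
     log 2 (Re (det (mat 1 + c *\<^sub>R (Z ** R ** cadj Z)))))"

lemma cap_known_eq_max_log_det:
  "cap_known W \<rho> H = W / real CARD('n) * max_log_det (\<rho> / real CARD('t)) (block_diag H)"
  for H :: "'n::finite \<Rightarrow> complex^'t::finite^'r::finite"
  by (simp add: cap_known_def max_log_det_def card_prod)

lemma log_det_trace_constrained_le:
  fixes Z :: "complex^'c::finite^'r::finite"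
  assumes "psd_herm R" "trace R = of_nat CARD('c)" "0 \<le> c"
  shows "log 2 (Re (det (mat 1 + c *\<^sub>R (Z ** R ** cadj Z)))) \<le>
     log 2 (fact CARD('r)) + real CARD('r) * log 2 (1 + c * (real CARD('c)^2 * real CARD('c)))
       + real CARD('r) * log 2 (1 + lambda_max (Z ** cadj Z))"
  using assms psd_herm_norm_entry_le_trace[OF assms(1), of "real CARD('c)"]
  by (intro log_det_I_plus_sandwich_le) simp_all

lemma trace_constrained_nonempty:
  "(mat 1 :: complex^'c::finite^'c) \<in> {R. psd_herm R \<and> trace R = of_nat CARD('c)}"
proof -
  have "trace (mat 1 :: complex^'c^'c) = of_nat CARD('c)" by (simp add: trace_def mat_def)
  then show ?thesis using psd_herm_mat_1 by simp
qed

lemma max_log_det_le: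
  fixes Z :: "complex^'c::finite^'r::finite"
  assumes "0 \<le> c"
  shows "max_log_det c Z \<le>
     log 2 (fact CARD('r)) + real CARD('r) * log 2 (1 + c * (real CARD('c)^2 * real CARD('c)))
       + real CARD('r) * log 2 (1 + lambda_max (Z ** cadj Z))"
  unfolding max_log_det_def
  using trace_constrained_nonempty log_det_trace_constrained_le[OF _ _ assms]
  by (intro cSUP_least) blast+

lemma log_det_I_plus_gram_le:
  fixes A :: "complex^'c::finite^'r::finite"
  assumes "0 \<le> c"
  shows "log 2 (Re (det (mat 1 + c *\<^sub>R (A ** cadj A)))) \<le>
     log 2 (fact CARD('r)) + real CARD('r) * log 2 (1 + c * real CARD('c)^2)
       + real CARD('r) * log 2 (1 + lambda_max (A ** cadj A))"
proof -
  have "cmod ((mat 1 :: complex^'c^'c) $ p $ q) \<le> 1" for p q by (simp add: mat_def)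
  from log_det_I_plus_sandwich_le[OF psd_herm_mat_1 this assms, of A] show ?thesis by simp
qed

lemma cap_known_le_ln:
  fixes W \<rho> :: real
  assumes "0 < W" "0 \<le> \<rho>"
  obtains \<alpha> \<beta> where "0 < \<beta>"
    "\<And>H :: 'n::finite \<Rightarrow> complex^'t::finite^'r::finite.
       cap_known W \<rho> H \<le> \<alpha> + \<beta> * ln (1 + lambda_max (block_diag H ** cadj (block_diag H)))"
proof
  let ?w = "W / real CARD('n)" and ?r = "real CARD('r \<times> 'n)" and ?c = "\<rho> / real CARD('t)"
  let ?a = "log 2 (fact CARD('r \<times> 'n)) + ?r * log 2 (1 + ?c * (real CARD('t \<times> 'n)^2 * real CARD('t \<times> 'n)))"
  show "0 < ?w * ?r / ln 2" using assms by simp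
  fix H :: "'n \<Rightarrow> complex^'t^'r"
  have "max_log_det ?c (block_diag H) \<le> ?a + ?r * log 2 (1 + lambda_max (block_diag H ** cadj (block_diag H)))"
    using max_log_det_le[of ?c "block_diag H"] assms by simp
  then have "cap_known W \<rho> H \<le> ?w * (?a + ?r * log 2 (1 + lambda_max (block_diag H ** cadj (block_diag H))))"
    unfolding cap_known_eq_max_log_det using assms by (intro mult_left_mono) auto
  then show "cap_known W \<rho> H \<le> ?w * ?a + ?w * ?r / ln 2 * ln (1 + lambda_max (block_diag H ** cadj (block_diag H)))"
    by (simp add: log_def algebra_simps)
qed

lemma cap_unknown_le_ln:
  fixes W \<rho> :: real
  assumes "0 < W" "0 \<le> \<rho>"
  obtains \<alpha> \<beta> where "0 < \<beta>"
    "\<And>H :: 'n::finite \<Rightarrow> complex^'t::finite^'r::finite.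
       cap_unknown W \<rho> H \<le> \<alpha> + \<beta> * ln (1 + lambda_max (block_diag H ** cadj (block_diag H)))"
proof
  let ?r = "real CARD('r)" and ?c = "\<rho> / real CARD('t)"
  let ?a = "log 2 (fact CARD('r)) + ?r * log 2 (1 + ?c * real CARD('t)^2)"
  show "0 < W * ?r / ln 2" using assms by simp
  fix H :: "'n \<Rightarrow> complex^'t^'r"
  let ?B = "lambda_max (block_diag H ** cadj (block_diag H))"
  have "log 2 (Re (det (mat 1 + ?c *\<^sub>R (H i ** cadj (H i))))) \<le> ?a + ?r * log 2 (1 + ?B)" for i
  proof -
    have "log 2 (Re (det (mat 1 + ?c *\<^sub>R (H i ** cadj (H i)))))
        \<le> ?a + ?r * log 2 (1 + lambda_max (H i ** cadj (H i)))"
      using log_det_I_plus_gram_le[of ?c "H i"] assms by simp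
    also have "\<dots> \<le> ?a + ?r * log 2 (1 + ?B)"
      using lambda_max_block_le_block_diag[of H i] lambda_max_gram_nonneg[of "H i"]
      by (intro add_left_mono mult_left_mono log_mono) auto
    finally show ?thesis .
  qed
  then have "(\<Sum>i\<in>UNIV. log 2 (Re (det (mat 1 + ?c *\<^sub>R (H i ** cadj (H i))))))
      \<le> (\<Sum>i\<in>(UNIV::'n set). ?a + ?r * log 2 (1 + ?B))"
    by (rule sum_mono)
  also have "\<dots> = real CARD('n) * (?a + ?r * log 2 (1 + ?B))" by simp
  finally have "(\<Sum>i\<in>UNIV. log 2 (Re (det (mat 1 + ?c *\<^sub>R (H i ** cadj (H i))))))
      \<le> real CARD('n) * (?a + ?r * log 2 (1 + ?B))" .
  then have "cap_unknown W \<rho> H \<le> W / real CARD('n) * (real CARD('n) * (?a + ?r * log 2 (1 + ?B)))"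
    unfolding cap_unknown_def using assms by (intro mult_left_mono) auto
  then show "cap_unknown W \<rho> H \<le> W * ?a + W * ?r / ln 2 * ln (1 + ?B)"
    by (simp add: log_def algebra_simps)
qed

lemma borel_measurable_SUP_continuous:
  fixes f :: "'i \<Rightarrow> 'b::topological_space \<Rightarrow> real"
  assumes "S \<noteq> {}" and "\<And>x. bdd_above ((\<lambda>i. f i x) ` S)"
    and "\<And>i. i \<in> S \<Longrightarrow> continuous_on UNIV (f i)"
  shows "(\<lambda>x. SUP i\<in>S. f i x) \<in> borel_measurable borel"
  unfolding borel_measurable_iff_greater
proof
  fix a
  have "{x. a < (SUP i\<in>S. f i x)} = (\<Union>i\<in>S. {x. a < f i x})"
    using less_cSUP_iff[OF assms(1,2)] by blast
  also have "open \<dots>"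
    using assms(3) by (intro open_UN ballI open_Collect_less continuous_on_const) auto
  finally show "{x \<in> space borel. a < (SUP i\<in>S. f i x)} \<in> sets borel" by simp
qed

lemma borel_measurable_lambda_max_gram:
  "(\<lambda>A::complex^'c::finite^'r::finite. lambda_max (A ** cadj A)) \<in> borel_measurable borel"
  unfolding lambda_max_gram_eq_SUP
proof (rule borel_measurable_SUP_continuous)
  show "bdd_above ((\<lambda>x. (norm (cadj A *v x))^2) ` sphere 0 1)" for A :: "complex^'c^'r"
  proof (rule bdd_aboveI2)
    fix x :: "complex^'r" assume "x \<in> sphere 0 1"
    then show "(norm (cadj A *v x))^2 \<le> lambda_max (A ** cadj A)"
      using norm_cadj_mv_le_lambda_max[of A x] by simp
  qed
  show "continuous_on UNIV (\<lambda>A::complex^'c^'r. (norm (cadj A *v x))^2)" for x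
    unfolding cadj_def matrix_vector_mult_def by (intro continuous_intros)
qed simp

lemma borel_measurable_max_log_det:
  assumes "0 \<le> c"
  shows "(max_log_det c :: complex^'c::finite^'r::finite \<Rightarrow> real) \<in> borel_measurable borel"
  unfolding max_log_det_def[abs_def]
proof (rule borel_measurable_SUP_continuous)
  show "bdd_above ((\<lambda>R. log 2 (Re (det (mat 1 + c *\<^sub>R (Z ** R ** cadj Z)))))
      ` {R :: complex^'c^'c. psd_herm R \<and> trace R = of_nat CARD('c)})" for Z :: "complex^'c^'r"
    by (rule bdd_aboveI2, rule log_det_trace_constrained_le[OF _ _ assms]) auto
  fix R :: "complex^'c^'c" assume "R \<in> {R. psd_herm R \<and> trace R = of_nat CARD('c)}"
  then have pos: "\<forall>Z::complex^'c^'r. 0 < Re (det (mat 1 + c *\<^sub>R (Z ** R ** cadj Z)))"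
    using assms by (intro allI Re_det_I_plus_psd_pos psd_herm_scaleR_sandwich) auto
  have "continuous_on UNIV (\<lambda>Z::complex^'c^'r. Re (det (mat 1 + c *\<^sub>R (Z ** R ** cadj Z))))"
    unfolding det_def matrix_matrix_mult_def cadj_def by (intro continuous_intros)
  then show "continuous_on UNIV
      (\<lambda>Z::complex^'c^'r. log 2 (Re (det (mat 1 + c *\<^sub>R (Z ** R ** cadj Z)))))"
    by (rule continuous_on_log[OF continuous_on_const]) (use pos in \<open>auto simp: less_le\<close>)
qed (use trace_constrained_nonempty in auto)

lemma block_diag_eq_sum:
  "block_diag H = (\<Sum>k\<in>UNIV. \<chi> ri tj. if snd ri = k \<and> snd tj = k then H k $ fst ri $ fst tj else 0)"
  unfolding block_diag_def
  by (simp add: vec_eq_iff, intro allI, subst sum_UNIV_single, auto)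

lemma borel_measurable_block_diag:
  fixes H :: "'a \<Rightarrow> 'n::finite \<Rightarrow> complex^'t::finite^'r::finite"
  assumes "\<And>i. (\<lambda>\<omega>. H \<omega> i) \<in> borel_measurable M"
  shows "(\<lambda>\<omega>. block_diag (H \<omega>)) \<in> borel_measurable M"
proof -
  have embed: "continuous_on UNIV (\<lambda>A::complex^'t^'r.
      \<chi> (ri::'r \<times> 'n) (tj::'t \<times> 'n). if snd ri = k \<and> snd tj = k then A $ fst ri $ fst tj else 0)" for k
  proof (intro continuous_on_vec_lambda)
    fix ri :: "'r \<times> 'n" and tj :: "'t \<times> 'n"
    show "continuous_on UNIV (\<lambda>A::complex^'t^'r. if snd ri = k \<and> snd tj = k then A $ fst ri $ fst tj else 0)"
      by (cases "snd ri = k \<and> snd tj = k") (auto intro!: continuous_intros)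
  qed
  show ?thesis
    unfolding block_diag_eq_sum
    by (intro borel_measurable_sum borel_measurable_continuous_on[OF embed] assms)
qed

lemma borel_measurable_cap_known:
  fixes H :: "'a \<Rightarrow> 'n::finite \<Rightarrow> complex^'t::finite^'r::finite"
  assumes "\<And>i. (\<lambda>\<omega>. H \<omega> i) \<in> borel_measurable M" and "0 \<le> \<rho>"
  shows "(\<lambda>\<omega>. cap_known W \<rho> (H \<omega>)) \<in> borel_measurable M"
proof -
  have "max_log_det (\<rho> / real CARD('t)) \<in> borel_measurable borel"
    using assms(2) by (intro borel_measurable_max_log_det) simp
  from measurable_comp[OF borel_measurable_block_diag[OF assms(1)] this]
  show ?thesis unfolding cap_known_eq_max_log_det comp_def
    by (intro borel_measurable_times borel_measurable_const)
qed

lemma borel_measurable_cap_unknown: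
  fixes H :: "'a \<Rightarrow> 'n::finite \<Rightarrow> complex^'t::finite^'r::finite"
  assumes "\<And>i. (\<lambda>\<omega>. H \<omega> i) \<in> borel_measurable M"
  shows "(\<lambda>\<omega>. cap_unknown W \<rho> (H \<omega>)) \<in> borel_measurable M"
proof -
  have cont: "continuous_on UNIV (\<lambda>A::complex^'t^'r. Re (det (mat 1 + c *\<^sub>R (A ** cadj A))))" for c
    unfolding det_def matrix_matrix_mult_def cadj_def by (intro continuous_intros)
  show ?thesis
    unfolding cap_unknown_def
    by (intro borel_measurable_times borel_measurable_const borel_measurable_sum
        borel_measurable_log borel_measurable_continuous_on[OF cont] assms)
qed

section \<open>Moments and tails\<close>

definition finite_power_moment :: "'a measure \<Rightarrow> ('a \<Rightarrow> real) \<Rightarrow> bool" where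
  "finite_power_moment M X \<longleftrightarrow> (\<exists>\<theta>>0. (\<integral>\<^sup>+ \<omega>. ennreal ((1 + X \<omega>) powr \<theta>) \<partial>M) < \<infinity>)"

lemma finite_power_moment_mono:
  assumes "finite_power_moment M Y" and "\<And>\<omega>. 0 \<le> X \<omega>" and "\<And>\<omega>. X \<omega> \<le> Y \<omega>"
  shows "finite_power_moment M X"
proof -
  obtain \<theta> where "0 < \<theta>" and fin: "(\<integral>\<^sup>+ \<omega>. ennreal ((1 + Y \<omega>) powr \<theta>) \<partial>M) < \<infinity>"
    using assms(1) unfolding finite_power_moment_def by blast
  moreover have "(\<integral>\<^sup>+ \<omega>. ennreal ((1 + X \<omega>) powr \<theta>) \<partial>M) \<le> (\<integral>\<^sup>+ \<omega>. ennreal ((1 + Y \<omega>) powr \<theta>) \<partial>M)"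
    using assms(2,3) \<open>0 < \<theta>\<close> by (intro nn_integral_mono ennreal_leI powr_mono2) (auto intro: add_nonneg_nonneg)
  ultimately show ?thesis unfolding finite_power_moment_def by (meson le_less_trans)
qed

text \<open>With finitely many variables the smallest of the exponents works for all of them, because
  \<open>1 + L \<ge> 1\<close> makes \<open>(1 + L) powr \<theta>\<close> increasing in \<open>\<theta>\<close>.\<close>

lemma finite_power_moment_bounded_by_max:
  fixes L :: "'i::finite \<Rightarrow> 'a \<Rightarrow> real"
  assumes fin: "\<And>i. finite_power_moment M (L i)"
    and meas: "\<And>i. L i \<in> borel_measurable M"
    and L: "\<And>i \<omega>. 0 \<le> L i \<omega>" and B: "\<And>\<omega>. 0 \<le> B \<omega>" and le: "\<And>\<omega>. \<exists>i. B \<omega> \<le> L i \<omega>"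
  shows "finite_power_moment M B"
proof -
  obtain \<Theta> where \<Theta>: "\<And>i. 0 < \<Theta> i" "\<And>i. (\<integral>\<^sup>+ \<omega>. ennreal ((1 + L i \<omega>) powr \<Theta> i) \<partial>M) < \<infinity>"
    using fin unfolding finite_power_moment_def by metis
  define \<theta> where "\<theta> = Min (range \<Theta>)"
  have "0 < \<theta>" unfolding \<theta>_def using \<Theta>(1) by (subst Min_gr_iff) auto
  have "(\<integral>\<^sup>+ \<omega>. ennreal ((1 + L i \<omega>) powr \<theta>) \<partial>M) < \<infinity>" for i
  proof -
    have "\<theta> \<le> \<Theta> i" unfolding \<theta>_def by (rule Min_le) auto
    then have "(\<integral>\<^sup>+ \<omega>. ennreal ((1 + L i \<omega>) powr \<theta>) \<partial>M) \<le> (\<integral>\<^sup>+ \<omega>. ennreal ((1 + L i \<omega>) powr \<Theta> i) \<partial>M)"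
      using L by (intro nn_integral_mono ennreal_leI powr_mono) auto
    then show ?thesis using \<Theta>(2)[of i] by (meson le_less_trans)
  qed
  then have "(\<Sum>i\<in>UNIV. \<integral>\<^sup>+ \<omega>. ennreal ((1 + L i \<omega>) powr \<theta>) \<partial>M) < \<infinity>"
    by (simp add: less_top)
  moreover have "(1 + B \<omega>) powr \<theta> \<le> (\<Sum>i\<in>UNIV. (1 + L i \<omega>) powr \<theta>)" for \<omega>
  proof -
    obtain k where "B \<omega> \<le> L k \<omega>" using le by blast
    then have "(1 + B \<omega>) powr \<theta> \<le> (1 + L k \<omega>) powr \<theta>"
      using B[of \<omega>] \<open>0 < \<theta>\<close> by (intro powr_mono2) auto
    also have "\<dots> \<le> (\<Sum>i\<in>UNIV. (1 + L i \<omega>) powr \<theta>)" by (rule member_le_sum) auto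
    finally show ?thesis .
  qed
  then have "(\<integral>\<^sup>+ \<omega>. ennreal ((1 + B \<omega>) powr \<theta>) \<partial>M)
      \<le> (\<Sum>i\<in>UNIV. \<integral>\<^sup>+ \<omega>. ennreal ((1 + L i \<omega>) powr \<theta>) \<partial>M)"
    using meas by (simp add: nn_integral_mono ennreal_leI flip: nn_integral_sum)
  ultimately show ?thesis
    unfolding finite_power_moment_def using \<open>0 < \<theta>\<close> by (meson le_less_trans)
qed

text \<open>Markov's inequality for \<open>(1 + L) powr \<theta>\<close>: the event \<open>X > x\<close> forces
  \<open>(1 + L) powr \<theta> \<ge> exp (\<theta> (x - \<alpha>) / \<beta>)\<close>.\<close>

lemma tail_le_exp_of_le_ln:
  assumes "prob_space M" and "X \<in> borel_measurable M" and "L \<in> borel_measurable M"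
    and L: "\<And>\<omega>. 0 \<le> L \<omega>" and "0 < \<theta>"
    and fin: "(\<integral>\<^sup>+ \<omega>. ennreal ((1 + L \<omega>) powr \<theta>) \<partial>M) < \<infinity>"
    and "0 < \<beta>" and X: "\<And>\<omega>. \<omega> \<in> space M \<Longrightarrow> X \<omega> \<le> \<alpha> + \<beta> * ln (1 + L \<omega>)"
  shows "measure M {\<omega> \<in> space M. X \<omega> > x}
    \<le> (\<integral>\<omega>. (1 + L \<omega>) powr \<theta> \<partial>M) * exp (\<theta> * \<alpha> / \<beta>) * exp (- (\<theta> / \<beta>) * x)"
proof -
  interpret prob_space M by fact
  define g where "g \<omega> = (1 + L \<omega>) powr \<theta>" for \<omega>
  define s where "s = exp (\<theta> * ((x - \<alpha>) / \<beta>))"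
  have g: "g \<in> borel_measurable M" unfolding g_def using assms(3) by measurable
  have gi: "integrable M g" by (rule integrableI_nonneg[OF g]) (use fin in \<open>auto simp: g_def\<close>)
  have "{\<omega> \<in> space M. X \<omega> > x} \<subseteq> {\<omega> \<in> space M. g \<omega> \<ge> s}"
  proof safe
    fix \<omega> assume "\<omega> \<in> space M" "x < X \<omega>"
    then have "x - \<alpha> < \<beta> * ln (1 + L \<omega>)" using X by fastforce
    then have "(x - \<alpha>) / \<beta> < ln (1 + L \<omega>)" using \<open>0 < \<beta>\<close> by (simp add: divide_less_eq mult.commute)
    then have "\<theta> * ((x - \<alpha>) / \<beta>) \<le> \<theta> * ln (1 + L \<omega>)"
      using \<open>0 < \<theta>\<close> by (intro mult_left_mono) auto
    then have "s \<le> exp (\<theta> * ln (1 + L \<omega>))" unfolding s_def by (rule exp_mono)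
    also have "\<dots> = g \<omega>" unfolding g_def powr_def using L[of \<omega>] by (simp add: mult.commute)
    finally show "s \<le> g \<omega>" .
  qed
  then have "measure M {\<omega> \<in> space M. X \<omega> > x} \<le> measure M {\<omega> \<in> space M. g \<omega> \<ge> s}"
    using g assms(2) by (intro finite_measure_mono) auto
  also have "\<dots> \<le> (\<integral>\<omega>. g \<omega> \<partial>M) / s"
    by (rule integral_Markov_inequality_measure[OF gi, where A="space M"]) (auto simp: g_def s_def)
  also have "\<dots> = (\<integral>\<omega>. g \<omega> \<partial>M) * exp (\<theta> * \<alpha> / \<beta>) * exp (- (\<theta> / \<beta>) * x)"
  proof -
    have "exp (\<theta> * \<alpha> / \<beta>) * exp (- (\<theta> / \<beta>) * x) = exp (\<theta> * \<alpha> / \<beta> + - (\<theta> / \<beta>) * x)"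
      by (rule exp_add[symmetric])
    also have "\<dots> = exp (- (\<theta> * ((x - \<alpha>) / \<beta>)))"
      by (rule arg_cong[where f = exp]) (use \<open>0 < \<beta>\<close> in \<open>simp add: field_simps\<close>)
    also have "\<dots> = inverse s" unfolding s_def by (rule exp_minus)
    finally show ?thesis by (simp add: divide_inverse mult.assoc)
  qed
  finally show ?thesis unfolding g_def .
qed

lemma light_tailed_if_le_ln:
  assumes "prob_space M" and "X \<in> borel_measurable M" and "L \<in> borel_measurable M"
    and "\<And>\<omega>. 0 \<le> L \<omega>" and "finite_power_moment M L"
    and "0 < \<beta>" and "\<And>\<omega>. \<omega> \<in> space M \<Longrightarrow> X \<omega> \<le> \<alpha> + \<beta> * ln (1 + L \<omega>)"
  shows "light_tailed M X"
proof -
  obtain \<theta> where "0 < \<theta>" and fin: "(\<integral>\<^sup>+ \<omega>. ennreal ((1 + L \<omega>) powr \<theta>) \<partial>M) < \<infinity>"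
    using assms(5) unfolding finite_power_moment_def by blast
  let ?K = "(\<integral>\<omega>. (1 + L \<omega>) powr \<theta> \<partial>M) * exp (\<theta> * \<alpha> / \<beta>)"
  have "(\<lambda>x. measure M {\<omega> \<in> space M. X \<omega> > x}) \<in> O[at_top](\<lambda>x. exp (- (\<theta> / \<beta>) * x))"
    using tail_le_exp_of_le_ln[OF assms(1-4) \<open>0 < \<theta>\<close> fin assms(6,7)]
    by (intro bigoI[where c = ?K] always_eventually) simp
  moreover have "0 < \<theta> / \<beta>" using \<open>0 < \<theta>\<close> assms(6) by simp
  ultimately show ?thesis unfolding light_tailed_def using assms(2) by blast
qed

lemma finite_power_moment_blocks_iff:
  fixes H :: "'a \<Rightarrow> 'n::finite \<Rightarrow> complex^'t::finite^'r::finite"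
  assumes "\<And>i. (\<lambda>\<omega>. H \<omega> i) \<in> borel_measurable M"
  shows "(\<forall>i. finite_power_moment M (\<lambda>\<omega>. lambda_max (H \<omega> i ** cadj (H \<omega> i))))
     \<longleftrightarrow> finite_power_moment M (\<lambda>\<omega>. lambda_max (block_diag (H \<omega>) ** cadj (block_diag (H \<omega>))))"
proof
  assume fin: "\<forall>i. finite_power_moment M (\<lambda>\<omega>. lambda_max (H \<omega> i ** cadj (H \<omega> i)))"
  have meas: "(\<lambda>\<omega>. lambda_max (H \<omega> i ** cadj (H \<omega> i))) \<in> borel_measurable M" for i
    using measurable_comp[OF assms borel_measurable_lambda_max_gram] by (simp add: comp_def)
  show "finite_power_moment M (\<lambda>\<omega>. lambda_max (block_diag (H \<omega>) ** cadj (block_diag (H \<omega>))))"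
    by (rule finite_power_moment_bounded_by_max[where L = "\<lambda>i \<omega>. lambda_max (H \<omega> i ** cadj (H \<omega> i))"])
      (use fin meas in \<open>simp_all add: lambda_max_gram_nonneg lambda_max_block_diag_le_block\<close>)
next
  assume "finite_power_moment M (\<lambda>\<omega>. lambda_max (block_diag (H \<omega>) ** cadj (block_diag (H \<omega>))))"
  then show "\<forall>i. finite_power_moment M (\<lambda>\<omega>. lambda_max (H \<omega> i ** cadj (H \<omega> i)))"
    by (intro allI, rule finite_power_moment_mono) (simp_all add: lambda_max_gram_nonneg lambda_max_block_le_block_diag)
qed

lemma borel_measurable_lambda_max_block_diag:
  fixes H :: "'a \<Rightarrow> 'n::finite \<Rightarrow> complex^'t::finite^'r::finite"
  assumes "\<And>i. (\<lambda>\<omega>. H \<omega> i) \<in> borel_measurable M"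
  shows "(\<lambda>\<omega>. lambda_max (block_diag (H \<omega>) ** cadj (block_diag (H \<omega>)))) \<in> borel_measurable M"
  using measurable_comp[OF borel_measurable_block_diag[OF assms] borel_measurable_lambda_max_gram]
  by (simp add: comp_def)

lemma light_tailed_cap_known:
  fixes H :: "'a \<Rightarrow> 'n::finite \<Rightarrow> complex^'t::finite^'r::finite"
  assumes "prob_space M" and "\<And>i. (\<lambda>\<omega>. H \<omega> i) \<in> borel_measurable M" and "0 < W" "0 \<le> \<rho>"
    and "finite_power_moment M (\<lambda>\<omega>. lambda_max (block_diag (H \<omega>) ** cadj (block_diag (H \<omega>))))"
  shows "light_tailed M (\<lambda>\<omega>. cap_known W \<rho> (H \<omega>))"
proof -
  obtain \<alpha> \<beta> where \<beta>: "0 < \<beta>" and bound: "\<And>H :: 'n \<Rightarrow> complex^'t^'r.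
      cap_known W \<rho> H \<le> \<alpha> + \<beta> * ln (1 + lambda_max (block_diag H ** cadj (block_diag H)))"
    using cap_known_le_ln[OF assms(3,4)] by blast
  show ?thesis
  proof (rule light_tailed_if_le_ln[OF assms(1) borel_measurable_cap_known[of H, OF assms(2,4)]
        borel_measurable_lambda_max_block_diag[of H, OF assms(2)] lambda_max_gram_nonneg assms(5) \<beta>])
    show "cap_known W \<rho> (H \<omega>) \<le> \<alpha> + \<beta> * ln (1 + lambda_max (block_diag (H \<omega>) ** cadj (block_diag (H \<omega>))))"
      for \<omega> by (rule bound)
  qed
qed

lemma light_tailed_cap_unknown:
  fixes H :: "'a \<Rightarrow> 'n::finite \<Rightarrow> complex^'t::finite^'r::finite"
  assumes "prob_space M" and "\<And>i. (\<lambda>\<omega>. H \<omega> i) \<in> borel_measurable M" and "0 < W" "0 \<le> \<rho>"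
    and "finite_power_moment M (\<lambda>\<omega>. lambda_max (block_diag (H \<omega>) ** cadj (block_diag (H \<omega>))))"
  shows "light_tailed M (\<lambda>\<omega>. cap_unknown W \<rho> (H \<omega>))"
proof -
  obtain \<alpha> \<beta> where \<beta>: "0 < \<beta>" and bound: "\<And>H :: 'n \<Rightarrow> complex^'t^'r.
      cap_unknown W \<rho> H \<le> \<alpha> + \<beta> * ln (1 + lambda_max (block_diag H ** cadj (block_diag H)))"
    using cap_unknown_le_ln[OF assms(3,4)] by blast
  show ?thesis
  proof (rule light_tailed_if_le_ln[OF assms(1) borel_measurable_cap_unknown[of H, OF assms(2)]
        borel_measurable_lambda_max_block_diag[of H, OF assms(2)] lambda_max_gram_nonneg assms(5) \<beta>])
    show "cap_unknown W \<rho> (H \<omega>) \<le> \<alpha> + \<beta> * ln (1 + lambda_max (block_diag (H \<omega>) ** cadj (block_diag (H \<omega>))))"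
      for \<omega> by (rule bound)
  qed
qed

theorem theorem2:
  fixes M :: "'a measure"
    and H :: "'a \<Rightarrow> 'n::finite \<Rightarrow> complex^'t::finite^'r::finite"
    and W \<rho> :: real
  assumes "prob_space M"
    and "\<And>i. (\<lambda>\<omega>. H \<omega> i) \<in> borel_measurable M"
    and "W > 0" and "\<rho> > 0"
  shows "((\<forall>i. \<exists>\<theta>>0. (\<integral>\<^sup>+ \<omega>. ennreal ((1 + lambda_max (H \<omega> i ** cadj (H \<omega> i))) powr \<theta>) \<partial>M) < \<infinity>)
           \<longleftrightarrow> (\<exists>\<theta>>0. (\<integral>\<^sup>+ \<omega>. ennreal ((1 + lambda_max (block_diag (H \<omega>) ** cadj (block_diag (H \<omega>)))) powr \<theta>) \<partial>M) < \<infinity>))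
       \<and> ((\<exists>\<theta>>0. (\<integral>\<^sup>+ \<omega>. ennreal ((1 + lambda_max (block_diag (H \<omega>) ** cadj (block_diag (H \<omega>)))) powr \<theta>) \<partial>M) < \<infinity>)
           \<longrightarrow> light_tailed M (\<lambda>\<omega>. cap_known W \<rho> (H \<omega>)) \<and> light_tailed M (\<lambda>\<omega>. cap_unknown W \<rho> (H \<omega>)))"
proof -
  let ?B = "\<lambda>\<omega>. lambda_max (block_diag (H \<omega>) ** cadj (block_diag (H \<omega>)))"
  have "(\<forall>i. finite_power_moment M (\<lambda>\<omega>. lambda_max (H \<omega> i ** cadj (H \<omega> i))))
      \<longleftrightarrow> finite_power_moment M ?B"
    by (rule finite_power_moment_blocks_iff[OF assms(2)])
  moreover have "light_tailed M (\<lambda>\<omega>. cap_known W \<rho> (H \<omega>))"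
    and "light_tailed M (\<lambda>\<omega>. cap_unknown W \<rho> (H \<omega>))" if "finite_power_moment M ?B"
    using light_tailed_cap_known[OF assms(1,2,3) _ that] light_tailed_cap_unknown[OF assms(1,2,3) _ that]
      assms(4) by simp_all
  ultimately show ?thesis unfolding finite_power_moment_def by blast
qed

end
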